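(* Let $d>3$, and consider Jackson networks with $d$ queues and routing matrix $p_{ij}=p\in(0,1/(d-1))$ for all $i\ne j$ (and $p_{ii}=0$), satisfying: $\lambda_1+\dots+\lambda_d=1$ with $0=\lambda_1<\lambda_i$ for all $i\in\{2,\dots,d\}$; and $\sqrt{\mu_i}-\sqrt{\nu_i}=t>0$ for all $i\in\{1,\dots,d\}$, where $\nu$ is the solution of the traffic equations; assume also hypotheses (A) and (B). Then for every $p>0$ small enough there is $t_p>0$ such that for every $t>t_p$ the equality $$\sup_{\gamma\in\Gamma}\min_{1\le i\le d}\gamma_i\Bigl(\frac{\mu_i}{1+\gamma_i}-\nu_i\Bigr)=\min_{1\le i\le d}\bigl(\sqrt{\mu_i}-\sqrt{\nu_i}\bigr)^2$$ fails to hold.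
   Context: Jackson network with $d$ queues: arrival rates $\lambda_i\ge0$, service rates $\mu_i>0$, routing matrix $P=(p_{ij})_{i,j=1}^d$ nonnegative with $p_{ii}=0$, $\sum_jp_{ij}\le1$, $p_{i0}=1-\sum_jp_{ij}$. Hypothesis (A): the jump-rate kernel on $\mathbb{Z}^d$ (jumps $+\epsilon^i$ at rate $\lambda_i$, $-\epsilon^i$ at rate $\mu_ip_{i0}$, $\epsilon^j-\epsilon^i$ at rate $\mu_ip_{ij}$) is irreducible (equivalently spectral radius of $P$ $<1$ and for every $i$ some $\lambda_jp^{(n)}_{ji}>0$); the traffic equations $\nu_j=\lambda_j+\sum_i\nu_ip_{ij}$ (which depend only on $\lambda$ and $P$) have a unique solution with $\nu_i>0$. Hypothesis (B): $\nu_i<\mu_i$ for all $i$. $Q_{ij}$: probability that the chain on $\{0,\dots,d\}$ with transitions $p_{ij}$ ($0$ absorbing) started at $i$ ever visits $j$ (time $0$ included). For $\gamma\in\mathbb{R}_+^d$, $\overrightarrow{\gamma_i}$ has components $\gamma_i^j=\log(1+Q_{ji}\gamma_i)$; $\Gamma$ is the set of $\gamma\in\mathbb{R}_+^d$ such that for every $i$ and nonzero $v\in\mathbb{R}_+^d$ with $v^i=0$, $\overrightarrow{\gamma_i}\cdot v<\max_j\overrightarrow{\gamma_j}\cdot v$. *)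

theory Defs
  imports Complex_Main "HOL-Library.Extended_Real"
begin

text \<open>Queues are indexed by 1..d. Routing matrix P :: nat => nat => real,
  arrival rates lam, service rates mu, all indexed by nat (values outside 1..d irrelevant).\<close>

definition p_out :: "nat \<Rightarrow> (nat \<Rightarrow> nat \<Rightarrow> real) \<Rightarrow> nat \<Rightarrow> real" where
  "p_out d P i = 1 - (\<Sum>j\<in>{1..d}. P i j)"

definition unit_int :: "nat \<Rightarrow> nat \<Rightarrow> int" where
  "unit_int i = (\<lambda>k. if k = i then 1 else 0)"

definition jumps :: "nat \<Rightarrow> (nat \<Rightarrow> real) \<Rightarrow> (nat \<Rightarrow> real) \<Rightarrow> (nat \<Rightarrow> nat \<Rightarrow> real) \<Rightarrow> (nat \<Rightarrow> int) set" where
  "jumps d lam mu P =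
     {unit_int i | i. i \<in> {1..d} \<and> lam i > 0}
   \<union> {(\<lambda>k. - unit_int i k) | i. i \<in> {1..d} \<and> mu i * p_out d P i > 0}
   \<union> {(\<lambda>k. unit_int j k - unit_int i k) | i j. i \<in> {1..d} \<and> j \<in> {1..d} \<and> mu i * P i j > 0}"

definition lattice_Zd :: "nat \<Rightarrow> (nat \<Rightarrow> int) set" where
  "lattice_Zd d = {x. \<forall>k. k \<notin> {1..d} \<longrightarrow> x k = 0}"

definition jump_rel :: "nat \<Rightarrow> (nat \<Rightarrow> real) \<Rightarrow> (nat \<Rightarrow> real) \<Rightarrow> (nat \<Rightarrow> nat \<Rightarrow> real) \<Rightarrow> ((nat \<Rightarrow> int) \<times> (nat \<Rightarrow> int)) set" where
  "jump_rel d lam mu P = {(x, \<lambda>k. x k + v k) | x v. v \<in> jumps d lam mu P}"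

definition kernel_irreducible :: "nat \<Rightarrow> (nat \<Rightarrow> real) \<Rightarrow> (nat \<Rightarrow> real) \<Rightarrow> (nat \<Rightarrow> nat \<Rightarrow> real) \<Rightarrow> bool" where
  "kernel_irreducible d lam mu P =
     (\<forall>x\<in>lattice_Zd d. \<forall>y\<in>lattice_Zd d. (x, y) \<in> (jump_rel d lam mu P)\<^sup>*)"

definition traffic_sol :: "nat \<Rightarrow> (nat \<Rightarrow> real) \<Rightarrow> (nat \<Rightarrow> nat \<Rightarrow> real) \<Rightarrow> (nat \<Rightarrow> real) \<Rightarrow> bool" where
  "traffic_sol d lam P nu = (\<forall>j\<in>{1..d}. nu j = lam j + (\<Sum>i\<in>{1..d}. nu i * P i j))"

definition hypA :: "nat \<Rightarrow> (nat \<Rightarrow> real) \<Rightarrow> (nat \<Rightarrow> real) \<Rightarrow> (nat \<Rightarrow> nat \<Rightarrow> real) \<Rightarrow> bool" where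
  "hypA d lam mu P =
     (kernel_irreducible d lam mu P \<and>
      (\<exists>nu. traffic_sol d lam P nu \<and> (\<forall>i\<in>{1..d}. nu i > 0) \<and>
            (\<forall>nu'. traffic_sol d lam P nu' \<longrightarrow> (\<forall>i\<in>{1..d}. nu' i = nu i))))"

definition hypB :: "nat \<Rightarrow> (nat \<Rightarrow> real) \<Rightarrow> (nat \<Rightarrow> real) \<Rightarrow> bool" where
  "hypB d nu mu = (\<forall>i\<in>{1..d}. nu i < mu i)"

text \<open>first_visit d P j n i: probability that the chain on {0,...,d} (0 absorbing,
  transitions P) started at i is at j for the first time at time n.\<close>
fun first_visit :: "nat \<Rightarrow> (nat \<Rightarrow> nat \<Rightarrow> real) \<Rightarrow> nat \<Rightarrow> nat \<Rightarrow> nat \<Rightarrow> real" where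
  "first_visit d P j 0 i = (if i = j then 1 else 0)"
| "first_visit d P j (Suc n) i =
     (if i = j then 0 else (\<Sum>k\<in>{1..d}. P i k * first_visit d P j n k))"

text \<open>Q_ij: probability to ever visit j starting from i (time 0 included).\<close>
definition Qvisit :: "nat \<Rightarrow> (nat \<Rightarrow> nat \<Rightarrow> real) \<Rightarrow> nat \<Rightarrow> nat \<Rightarrow> real" where
  "Qvisit d P i j = (\<Sum>n. first_visit d P j n i)"

definition gamma_vec :: "nat \<Rightarrow> (nat \<Rightarrow> nat \<Rightarrow> real) \<Rightarrow> (nat \<Rightarrow> real) \<Rightarrow> nat \<Rightarrow> nat \<Rightarrow> real" where
  "gamma_vec d P g i = (\<lambda>j. ln (1 + Qvisit d P j i * g i))"

definition dotd :: "nat \<Rightarrow> (nat \<Rightarrow> real) \<Rightarrow> (nat \<Rightarrow> real) \<Rightarrow> real" where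
  "dotd d u v = (\<Sum>k\<in>{1..d}. u k * v k)"

definition Gamma_set :: "nat \<Rightarrow> (nat \<Rightarrow> nat \<Rightarrow> real) \<Rightarrow> (nat \<Rightarrow> real) set" where
  "Gamma_set d P = {g. (\<forall>i\<in>{1..d}. g i \<ge> 0) \<and> (\<forall>k. k \<notin> {1..d} \<longrightarrow> g k = 0) \<and>
     (\<forall>i\<in>{1..d}. \<forall>v. (\<forall>k\<in>{1..d}. v k \<ge> 0) \<and> (\<exists>k\<in>{1..d}. v k \<noteq> 0) \<and> v i = 0 \<longrightarrow>
        dotd d (gamma_vec d P g i) v < Max ((\<lambda>j. dotd d (gamma_vec d P g j) v) ` {1..d}))}"

definition objective :: "nat \<Rightarrow> (nat \<Rightarrow> real) \<Rightarrow> (nat \<Rightarrow> real) \<Rightarrow> (nat \<Rightarrow> real) \<Rightarrow> real" where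
  "objective d mu nu g = Min ((\<lambda>i. g i * (mu i / (1 + g i) - nu i)) ` {1..d})"

definition routing_unif :: "real \<Rightarrow> nat \<Rightarrow> nat \<Rightarrow> real" where
  "routing_unif p = (\<lambda>i j. if i = j then 0 else p)"

end

theory Submission
  imports Defs
begin

(* With uniform routing p the traffic equations give nu_1 = O(p), while nu_j >= lam_j / 2 stays
   bounded below for j >= 2.  If some gamma in Gamma had all terms gamma_i (mu_i / (1 + gamma_i) - nu_i)
   above t^2 - nu_1, then gamma_1 would be of order t / sqrt p and every other gamma_j of order t.
   Since Q_k1 >= p and Q_kj <= 2p for k <> j, the vector v = indicator of {2,3,4} gives
   v . gamma_1 >= 3 log (1 + p gamma_1) > log (1 + gamma_j) + 2 log (1 + 2p gamma_j) >= v . gamma_j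
   for every j once t is large, contradicting the definition of Gamma at i = 1.  Hence the
   supremum is at most t^2 - nu_1 < t^2. *)

lemma first_visit_nonneg:
  assumes "\<And>i k. 0 \<le> P i k"
  shows "0 \<le> first_visit d P j n i"
  by (induction n arbitrary: i) (auto simp: assms intro!: sum_nonneg)

lemma first_visit_self: "first_visit d P j n j = (if n = 0 then 1 else 0)"
  by (cases n) auto

lemma first_visit_Suc_0: "first_visit d P j (Suc 0) i = (if i \<noteq> j \<and> j \<in> {1..d} then P i j else 0)"
  by (auto simp: if_distrib[of "(*) _"] sum.delta cong: if_cong)

lemma first_visit_Suc_le:
  assumes "\<And>i k. 0 \<le> P i k" "\<And>i k. P i k \<le> p"
  shows "first_visit d P j (Suc n) i \<le> p * (p * real d) ^ n"
proof (induction n arbitrary: i)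
  case 0
  have "0 \<le> p" using assms order_trans by blast
  then show ?case using assms(2) by (simp only: first_visit_Suc_0) auto
next
  case (Suc n)
  have "0 \<le> p" using assms order_trans by blast
  have step: "P i k * first_visit d P j (Suc n) k \<le> p * (p * (p * real d) ^ n)" for k
    using Suc assms first_visit_nonneg[of P d j "Suc n" k] \<open>0 \<le> p\<close> by (intro mult_mono) auto
  have "first_visit d P j (Suc (Suc n)) i \<le> (\<Sum>k\<in>{1..d}. P i k * first_visit d P j (Suc n) k)"
    using assms(1) first_visit_nonneg[OF assms(1)]
    by (auto simp del: first_visit.simps intro!: sum_nonneg simp: first_visit.simps(2)[of d P j "Suc n"])
  also have "\<dots> \<le> (\<Sum>k\<in>{1..d}. p * (p * (p * real d) ^ n))"
    by (rule sum_mono) (rule step)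
  also have "\<dots> = p * (p * real d) ^ Suc n"
    by (simp add: algebra_simps)
  finally show ?case .
qed

lemma Qvisit_self: "Qvisit d P j j = 1"
  using sums_single[of 0 "\<lambda>_. 1 :: real"] unfolding Qvisit_def first_visit_self
  by (simp add: sums_iff)

lemma Qvisit_off_diag_bounds:
  assumes "\<And>i k. 0 \<le> P i k" "\<And>i k. P i k \<le> p" "p * real d \<le> 1/2" "i \<noteq> j"
  shows "Qvisit d P i j \<le> 2 * p" and "j \<in> {1..d} \<Longrightarrow> P i j \<le> Qvisit d P i j"
proof -
  let ?f = "\<lambda>n. first_visit d P j (Suc n) i"
  have "0 \<le> p" using assms(1,2) order_trans by blast
  have geom: "summable (\<lambda>n. p * (p * real d) ^ n)"
    using assms(3) \<open>0 \<le> p\<close> by (intro summable_mult summable_geometric) auto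
  have f_nonneg: "0 \<le> ?f n" for n
    using first_visit_nonneg[OF assms(1)] .
  have f_le: "?f n \<le> p * (p * real d) ^ n" for n
    using first_visit_Suc_le[OF assms(1,2)] .
  have summable: "summable ?f"
    by (rule summable_comparison_test[OF _ geom]) (use f_nonneg f_le in \<open>auto simp del: first_visit.simps\<close>)
  from suminf_split_head[OF summable_Suc_iff[THEN iffD1, OF summable]]
  have Q_eq: "Qvisit d P i j = suminf ?f"
    unfolding Qvisit_def using assms(4) by (simp del: first_visit.simps(2))
  have "suminf ?f \<le> (\<Sum>n. p * (p * real d) ^ n)"
    using suminf_le[OF f_le summable geom] .
  also have "\<dots> = p / (1 - p * real d)"
  proof -
    have "norm (p * real d) < 1"
      using assms(3) \<open>0 \<le> p\<close> by simp
    from suminf_mult[OF summable_geometric[OF this], of p] suminf_geometric[OF this]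
    show ?thesis by simp
  qed
  also have "\<dots> \<le> 2 * p"
    using assms(3) \<open>0 \<le> p\<close> mult_left_mono[of "p * (real d * 2)" 1 p] by (simp add: field_simps)
  finally show "Qvisit d P i j \<le> 2 * p" unfolding Q_eq .
  assume "j \<in> {1..d}"
  then have "P i j = sum ?f {0}"
    using assms(4) by (simp add: first_visit_Suc_0 del: first_visit.simps)
  also have "\<dots> \<le> suminf ?f"
    by (rule sum_le_suminf[OF summable]) (use f_nonneg in \<open>simp_all del: first_visit.simps\<close>)
  finally show "P i j \<le> Qvisit d P i j" unfolding Q_eq .
qed

lemma gamma_vec_self: "gamma_vec d P g i i = ln (1 + g i)"
  by (simp add: gamma_vec_def Qvisit_self)

lemma gamma_vec_off_diag_bounds:
  assumes "\<And>i k. 0 \<le> P i k" "\<And>i k. P i k \<le> p" "p * real d \<le> 1/2"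
    and "k \<noteq> i" "i \<in> {1..d}" "0 \<le> g i"
  shows "ln (1 + P k i * g i) \<le> gamma_vec d P g i k" "gamma_vec d P g i k \<le> ln (1 + 2 * p * g i)"
proof -
  have "P k i \<le> Qvisit d P k i" "Qvisit d P k i \<le> 2 * p"
    using Qvisit_off_diag_bounds[OF assms(1-4)] assms(5) by auto
  then have "1 + P k i * g i \<le> 1 + Qvisit d P k i * g i" "1 + Qvisit d P k i * g i \<le> 1 + 2 * p * g i"
    using assms(6) by (auto intro: mult_right_mono)
  moreover have "0 < 1 + P k i * g i"
    using assms(1,6) by (simp add: add_pos_nonneg)
  ultimately show "ln (1 + P k i * g i) \<le> gamma_vec d P g i k" "gamma_vec d P g i k \<le> ln (1 + 2 * p * g i)"
    unfolding gamma_vec_def by simp_all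
qed

lemma dotd_indicator:
  assumes "A \<subseteq> {1..d}"
  shows "dotd d u (\<lambda>k. if k \<in> A then 1 else 0) = (\<Sum>k\<in>A. u k)"
proof -
  have "dotd d u (\<lambda>k. if k \<in> A then 1 else 0) = (\<Sum>k\<in>{1..d}. if k \<in> A then u k else 0)"
    unfolding dotd_def by (rule sum.cong) auto
  also have "\<dots> = (\<Sum>k\<in>{1..d} \<inter> A. u k)"
    by (simp add: sum.inter_restrict)
  also have "{1..d} \<inter> A = A"
    using assms by auto
  finally show ?thesis .
qed

lemma dotd_gamma_vec_routing_unif_ge:
  assumes "0 < p" "p * real d \<le> 1/2" "A \<subseteq> {1..d}" "i \<in> {1..d}" "i \<notin> A" "0 \<le> g i"
  shows "real (card A) * ln (1 + p * g i)
    \<le> dotd d (gamma_vec d (routing_unif p) g i) (\<lambda>k. if k \<in> A then 1 else 0)"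
proof -
  have P_bounds: "\<And>i k. 0 \<le> routing_unif p i k" "\<And>i k. routing_unif p i k \<le> p"
    using assms(1) by (auto simp: routing_unif_def)
  have "real (card A) * ln (1 + p * g i) = (\<Sum>k\<in>A. ln (1 + p * g i))"
    by simp
  also have "\<dots> = (\<Sum>k\<in>A. ln (1 + routing_unif p k i * g i))"
    using assms(5) by (intro sum.cong) (auto simp: routing_unif_def)
  also have "\<dots> \<le> (\<Sum>k\<in>A. gamma_vec d (routing_unif p) g i k)"
    using assms(3-6) by (intro sum_mono gamma_vec_off_diag_bounds(1)[OF P_bounds assms(2)]) auto
  finally show ?thesis
    unfolding dotd_indicator[OF assms(3)] .
qed

lemma dotd_gamma_vec_routing_unif_le:
  assumes "0 < p" "2 * p \<le> 1" "p * real d \<le> 1/2" "A \<subseteq> {1..d}" "A \<noteq> {}"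
    and "i \<in> {1..d}" "0 \<le> g i"
  shows "dotd d (gamma_vec d (routing_unif p) g i) (\<lambda>k. if k \<in> A then 1 else 0)
    \<le> ln (1 + g i) + (real (card A) - 1) * ln (1 + 2 * p * g i)"
proof -
  define X Y where "X = ln (1 + g i)" and "Y = ln (1 + 2 * p * g i)"
  have P_bounds: "\<And>i k. 0 \<le> routing_unif p i k" "\<And>i k. routing_unif p i k \<le> p"
    using assms(1) by (auto simp: routing_unif_def)
  have "finite A"
    using assms(4) finite_subset by blast
  have "2 * p * g i \<le> g i"
    using assms(2,7) mult_right_mono[of "2 * p" 1 "g i"] by simp
  then have "Y \<le> X"
    unfolding X_def Y_def using assms(1,7) by (simp add: add_pos_nonneg)
  have "(\<Sum>k\<in>A. gamma_vec d (routing_unif p) g i k) \<le> (\<Sum>k\<in>A. Y + (if k = i then X - Y else 0))"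
    using gamma_vec_off_diag_bounds(2)[where P = "routing_unif p" and p = p and d = d and g = g and i = i,
        OF P_bounds assms(3) _ assms(6,7)]
    by (intro sum_mono) (auto simp: X_def Y_def gamma_vec_self)
  also have "\<dots> \<le> X + (real (card A) - 1) * Y"
    using \<open>finite A\<close> assms(5) \<open>Y \<le> X\<close> card_gt_0_iff[of A] by (simp add: sum.distrib algebra_simps)
  finally show ?thesis
    unfolding dotd_indicator[OF assms(4)] X_def Y_def .
qed

lemma Gamma_set_routing_unif_dominated:
  assumes "4 \<le> d" "0 < p" "p * real d \<le> 1/2" "g \<in> Gamma_set d (routing_unif p)"
  shows "\<exists>j\<in>{2..d}. (1 + p * g 1) ^ 3 < (1 + g j) * (1 + 2 * p * g j)\<^sup>2"
proof -
  define A where "A = {2, 3, 4 :: nat}"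
  define v where "v = (\<lambda>k. if k \<in> A then 1 else 0 :: real)"
  let ?dot = "\<lambda>j. dotd d (gamma_vec d (routing_unif p) g j) v"
  have A: "A \<subseteq> {1..d}" "A \<noteq> {}" "card A = 3" "1 \<notin> A" "1 \<in> {1..d}"
    using assms(1) by (auto simp: A_def)
  have g_nonneg: "\<And>i. i \<in> {1..d} \<Longrightarrow> 0 \<le> g i"
    using assms(4) by (auto simp: Gamma_set_def)
  have "2 * p \<le> 1"
    using assms(1-3) mult_left_mono[of 4 "real d" p] by linarith
  have "(\<forall>k\<in>{1..d}. 0 \<le> v k) \<and> (\<exists>k\<in>{1..d}. v k \<noteq> 0) \<and> v 1 = 0"
    using A by (auto simp: v_def)
  then have "?dot 1 < Max (?dot ` {1..d})"
    using assms(4) A(5) unfolding Gamma_set_def by blast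
  moreover obtain j where j: "j \<in> {1..d}" "Max (?dot ` {1..d}) = ?dot j"
    using Max_in[of "?dot ` {1..d}"] assms(1) by fastforce
  ultimately have dot_less: "?dot 1 < ?dot j"
    by simp
  then have "j \<in> {2..d}"
    using j(1) by (cases "j = 1") auto
  have "3 * ln (1 + p * g 1) \<le> ?dot 1"
    using dotd_gamma_vec_routing_unif_ge[of p d A 1 g, OF assms(2,3) A(1,5,4) g_nonneg[OF A(5)]]
    by (simp add: A(3) v_def)
  moreover have "?dot j \<le> ln (1 + g j) + 2 * ln (1 + 2 * p * g j)"
    using dotd_gamma_vec_routing_unif_le[of p d A j g, OF assms(2) \<open>2 * p \<le> 1\<close> assms(3) A(1,2) j(1) g_nonneg[OF j(1)]]
    by (simp add: A(3) v_def)
  ultimately have "3 * ln (1 + p * g 1) < ln (1 + g j) + 2 * ln (1 + 2 * p * g j)"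
    using dot_less by linarith
  moreover have pos: "0 < 1 + p * g 1" "0 < 1 + g j" "0 < 1 + 2 * p * g j"
    using assms(2) g_nonneg[OF j(1)] g_nonneg[OF A(5)] by (auto intro: add_pos_nonneg)
  ultimately have "ln ((1 + p * g 1) ^ 3) < ln ((1 + g j) * (1 + 2 * p * g j)\<^sup>2)"
    by (simp add: ln_mult ln_realpow)
  then show ?thesis
    using \<open>j \<in> {2..d}\<close> pos by (subst (asm) ln_less_cancel_iff) auto
qed

lemma lower_bound_of_objective_term_gt:
  fixes s t g :: real
  assumes "0 < s" "0 < t" "0 \<le> g" "t\<^sup>2 - s\<^sup>2 < g * ((t + s)\<^sup>2 / (1 + g) - s\<^sup>2)"
  shows "(t - s) / (2 * s) < g"
proof -
  have "g * ((t + s)\<^sup>2 / (1 + g) - s\<^sup>2) = g * (t + s)\<^sup>2 / (1 + g) - g * s\<^sup>2"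
    by (simp add: right_diff_distrib)
  then have "t\<^sup>2 - s\<^sup>2 < g * (t + s)\<^sup>2 / (1 + g)"
    using assms(4) mult_nonneg_nonneg[OF assms(3) zero_le_power2[of s]] by linarith
  then have "(t\<^sup>2 - s\<^sup>2) * (1 + g) < g * (t + s)\<^sup>2"
    using assms(3) by (simp add: field_simps)
  then have "(t - s) * (t + s) < (2 * s * g) * (t + s)"
    by (simp add: algebra_simps power2_eq_square)
  then have "t - s < 2 * s * g"
    using assms(1,2) by (simp add: mult_less_cancel_right_pos)
  then show ?thesis
    using assms(1) by (simp add: pos_divide_less_eq mult.commute)
qed

lemma upper_bound_of_objective_term_gt:
  fixes s t g e :: real
  assumes "0 < s" "0 \<le> g" "e \<le> s\<^sup>2" "t\<^sup>2 - e < g * ((t + s)\<^sup>2 / (1 + g) - s\<^sup>2)"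
  shows "g < 2 + 2 * t / s"
proof -
  have "g * (t + s)\<^sup>2 / (1 + g) \<le> (t + s)\<^sup>2"
    using assms(2) by (simp add: field_simps)
  then have "g * s\<^sup>2 < 2 * t * s + s\<^sup>2 + e"
    using assms(4) by (simp add: algebra_simps power2_eq_square)
  also have "\<dots> \<le> (2 + 2 * t / s) * s\<^sup>2"
    using assms(1,3) by (simp add: field_simps power2_eq_square)
  finally show ?thesis
    using assms(1) by (simp add: mult_less_cancel_right_pos power2_eq_square)
qed

lemma product_le_cube_of_gamma_bounds:
  fixes p t \<sigma> s\<^sub>1 s\<^sub>j g\<^sub>1 g\<^sub>j :: real
  assumes "0 < p" "p \<le> 1/8" "0 < \<sigma>" "4096 * (3 + 2 / \<sigma>) * sqrt p \<le> \<sigma>\<^sup>2"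
    and "1 \<le> t" "\<sigma> \<le> 2 * p * t"
    and "0 < s\<^sub>1" "s\<^sub>1 \<le> 2 * sqrt p" "\<sigma> \<le> s\<^sub>j" "0 \<le> g\<^sub>j"
    and "(t - s\<^sub>1) / (2 * s\<^sub>1) < g\<^sub>1" "g\<^sub>j < 2 + 2 * t / s\<^sub>j"
  shows "(1 + g\<^sub>j) * (1 + 2 * p * g\<^sub>j)\<^sup>2 \<le> (1 + p * g\<^sub>1) ^ 3"
proof -
  define q W where "q = sqrt p" and "W = 3 + 2 / \<sigma>"
  have q_pos: "0 < q" and p_eq: "p = q\<^sup>2"
    using assms(1) by (auto simp: q_def)
  have "0 < t" using assms(5) by simp
  have "2 * t / s\<^sub>j \<le> 2 * t / \<sigma>"
    using assms(3,9) \<open>0 < t\<close> by (intro divide_left_mono) auto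
  then have first_factor_le: "1 + g\<^sub>j \<le> W * t"
    using assms(5,12) by (simp add: W_def algebra_simps)
  have "4 * p * t / s\<^sub>j \<le> 4 * p * t / \<sigma>"
    using assms(1,3,9) \<open>0 < t\<close> by (intro divide_left_mono) auto
  moreover have "2 \<le> 4 * p * t / \<sigma>"
    using assms(3,6) by (simp add: field_simps)
  moreover have "2 * p * g\<^sub>j \<le> 2 * p * (2 + 2 * t / s\<^sub>j)"
    using assms(1,12) by simp
  ultimately have second_factor_le: "1 + 2 * p * g\<^sub>j \<le> 8 * p * t / \<sigma>"
    using assms(2) by (simp add: algebra_simps)
  have "p * t / (4 * q) \<le> p * t / (2 * s\<^sub>1)"
    using assms(1,7,8) \<open>0 < t\<close> by (intro divide_left_mono) (auto simp: q_def)
  moreover have "p * ((t - s\<^sub>1) / (2 * s\<^sub>1)) \<le> p * g\<^sub>1"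
    using assms(1,11) by (intro mult_left_mono) auto
  moreover have "p * ((t - s\<^sub>1) / (2 * s\<^sub>1)) = p * t / (2 * s\<^sub>1) - p / 2"
    using assms(7) by (simp add: field_simps)
  moreover have "p * t / (4 * q) = q * t / 4"
    using q_pos by (simp add: p_eq power2_eq_square)
  ultimately have base_ge: "q * t / 4 \<le> 1 + p * g\<^sub>1"
    using assms(2) by linarith
  \<comment> \<open>4096 = 4^3 * 8^2, and p^2 = q^4 turns the cubic comparison into this linear one in q\<close>
  have "4096 * W * q \<le> \<sigma>\<^sup>2"
    using assms(4) by (simp add: W_def q_def)
  then have "(q ^ 3 * t ^ 3) * (4096 * W * q) \<le> (q ^ 3 * t ^ 3) * \<sigma>\<^sup>2"
    using q_pos \<open>0 < t\<close> by (intro mult_left_mono) auto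
  then have factor_product_le: "(W * t) * (8 * p * t / \<sigma>)\<^sup>2 \<le> (q * t / 4) ^ 3"
    using assms(3) by (simp add: p_eq field_simps power2_eq_square power3_eq_cube)
  have "(1 + g\<^sub>j) * (1 + 2 * p * g\<^sub>j)\<^sup>2 \<le> (W * t) * (8 * p * t / \<sigma>)\<^sup>2"
    using first_factor_le second_factor_le assms(1,10) by (intro mult_mono power_mono) auto
  also have "\<dots> \<le> (q * t / 4) ^ 3" by (rule factor_product_le)
  also have "\<dots> \<le> (1 + p * g\<^sub>1) ^ 3"
    using base_ge q_pos \<open>0 < t\<close> by (intro power_mono) auto
  finally show ?thesis .
qed

lemma traffic_sol_routing_unif:
  assumes "traffic_sol d lam (routing_unif p) nu" "j \<in> {1..d}"
  shows "(1 + p) * nu j = lam j + p * (\<Sum>i\<in>{1..d}. nu i)"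
proof -
  have "(\<Sum>i\<in>{1..d}. nu i * routing_unif p i j) = (\<Sum>i\<in>{1..d}. p * nu i - (if i = j then p * nu i else 0))"
    by (rule sum.cong) (auto simp: routing_unif_def)
  also have "\<dots> = p * (\<Sum>i\<in>{1..d}. nu i) - p * nu j"
    using assms(2) by (simp add: sum_subtractf sum_distrib_left)
  finally show ?thesis
    using assms unfolding traffic_sol_def by (auto simp: algebra_simps)
qed

lemma traffic_sol_routing_unif_total:
  assumes "traffic_sol d lam (routing_unif p) nu"
  shows "(1 - p * (real d - 1)) * (\<Sum>i\<in>{1..d}. nu i) = (\<Sum>i\<in>{1..d}. lam i)"
proof -
  let ?S = "\<Sum>i\<in>{1..d}. nu i"
  have "(1 + p) * ?S = (\<Sum>j\<in>{1..d}. lam j + p * ?S)"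
    using traffic_sol_routing_unif[OF assms] by (simp add: sum_distrib_left)
  then show ?thesis
    by (simp add: sum.distrib algebra_simps)
qed

lemma traffic_sol_routing_unif_bounds:
  assumes "traffic_sol d lam (routing_unif p) nu" "(\<Sum>i\<in>{1..d}. lam i) = 1" "lam 1 = 0"
    and "1 \<le> d" "0 < p" "p * real d \<le> 1/2"
  shows "0 < nu 1" "nu 1 \<le> 2 * p"
    and "\<And>j. j \<in> {1..d} \<Longrightarrow> 0 \<le> lam j \<Longrightarrow> nu 1 + lam j / 2 \<le> nu j"
proof -
  define S where "S = (\<Sum>i\<in>{1..d}. nu i)"
  define c where "c = 1 - p * (real d - 1)"
  have "1/2 \<le> c"
    using assms(5,6) by (simp add: c_def algebra_simps)
  moreover have "c * S = 1"
    using traffic_sol_routing_unif_total[OF assms(1)] assms(2) by (simp add: S_def c_def)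
  ultimately have S_eq: "S = 1 / c"
    by (simp add: field_simps)
  have "0 < S" "S \<le> 2"
    using \<open>1/2 \<le> c\<close> unfolding S_eq by (auto simp: divide_le_eq)
  have nu1: "(1 + p) * nu 1 = p * S"
    using traffic_sol_routing_unif[OF assms(1)] assms(3,4) by (simp add: S_def)
  then show "0 < nu 1"
    using \<open>0 < S\<close> assms(5) by (metis zero_less_mult_pos mult_pos_pos add_pos_pos zero_less_one)
  then have "nu 1 \<le> (1 + p) * nu 1"
    using assms(5) by simp
  also have "\<dots> \<le> 2 * p"
    using nu1 \<open>S \<le> 2\<close> assms(5) by simp
  finally show "nu 1 \<le> 2 * p" .
  fix j assume "j \<in> {1..d}" "0 \<le> lam j"
  then have "(1 + p) * (nu j - nu 1) = lam j"
    using traffic_sol_routing_unif[OF assms(1)] nu1 by (simp add: S_def algebra_simps)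
  then have "nu j - nu 1 = lam j / (1 + p)"
    using assms(5) by (simp add: field_simps)
  moreover have "p \<le> 1"
    using assms(4,5,6) mult_left_mono[of 1 "real d" p] by linarith
  moreover have "lam j / 2 \<le> lam j / (1 + p)"
    using \<open>0 \<le> lam j\<close> \<open>p \<le> 1\<close> assms(5) by (intro divide_left_mono) auto
  ultimately show "nu 1 + lam j / 2 \<le> nu j"
    by linarith
qed

lemma objective_le_of_mem_Gamma_set:
  assumes "4 \<le> d" "0 < p" "p * real d \<le> 1/2"
    and "0 < \<sigma>" "4096 * (3 + 2 / \<sigma>) * sqrt p \<le> \<sigma>\<^sup>2" "1 \<le> t" "\<sigma> \<le> 2 * p * t"
    and "0 < nu 1" "nu 1 \<le> 2 * p" "\<And>j. j \<in> {2..d} \<Longrightarrow> nu 1 + \<sigma>\<^sup>2 \<le> nu j"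
    and "\<And>i. i \<in> {1..d} \<Longrightarrow> mu i = (t + sqrt (nu i))\<^sup>2"
    and "g \<in> Gamma_set d (routing_unif p)"
  shows "objective d mu nu g \<le> t\<^sup>2 - nu 1"
proof (rule ccontr)
  assume "\<not> ?thesis"
  then have "t\<^sup>2 - nu 1 < objective d mu nu g"
    by simp
  then have term_gt: "t\<^sup>2 - nu 1 < g i * (mu i / (1 + g i) - nu i)" if "i \<in> {1..d}" for i
    unfolding objective_def using that assms(1) by (subst (asm) Min_gr_iff) auto
  have g_nonneg: "0 \<le> g i" if "i \<in> {1..d}" for i
    using assms(12) that by (auto simp: Gamma_set_def)
  have "p \<le> 1/8"
    using assms(1-3) mult_left_mono[of 4 "real d" p] by linarith
  have s1: "0 < sqrt (nu 1)" "sqrt (nu 1) \<le> 2 * sqrt p"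
    using assms(8,9) real_sqrt_le_mono[of "nu 1" "2\<^sup>2 * p"] by (auto simp: real_sqrt_mult)
  have "1 \<in> {1..d}"
    using assms(1) by simp
  then have "t\<^sup>2 - (sqrt (nu 1))\<^sup>2 < g 1 * ((t + sqrt (nu 1))\<^sup>2 / (1 + g 1) - (sqrt (nu 1))\<^sup>2)"
    using term_gt[of 1] assms(8,11) by simp
  then have g1: "(t - sqrt (nu 1)) / (2 * sqrt (nu 1)) < g 1"
    using s1(1) assms(6) g_nonneg[OF \<open>1 \<in> {1..d}\<close>] by (intro lower_bound_of_objective_term_gt) auto
  obtain j where j: "j \<in> {2..d}" "(1 + p * g 1) ^ 3 < (1 + g j) * (1 + 2 * p * g j)\<^sup>2"
    using Gamma_set_routing_unif_dominated[OF assms(1-3,12)] by blast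
  have nu_j: "nu 1 + \<sigma>\<^sup>2 \<le> nu j"
    using assms(10)[OF j(1)] .
  then have sj: "\<sigma> \<le> sqrt (nu j)"
    using assms(4,8) real_sqrt_le_mono[of "\<sigma>\<^sup>2" "nu j"] by simp
  have "nu 1 \<le> nu j"
    using nu_j zero_le_power2[of \<sigma>] by linarith
  then have "0 < sqrt (nu j)" "nu 1 \<le> (sqrt (nu j))\<^sup>2"
    using assms(8) by auto
  moreover have "t\<^sup>2 - nu 1 < g j * ((t + sqrt (nu j))\<^sup>2 / (1 + g j) - (sqrt (nu j))\<^sup>2)"
    using term_gt[of j] assms(11)[of j] j(1) \<open>nu 1 \<le> nu j\<close> assms(8) by simp
  moreover have gj_nonneg: "0 \<le> g j"
    using g_nonneg j(1) by simp
  ultimately have gj: "g j < 2 + 2 * t / sqrt (nu j)"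
    by (intro upper_bound_of_objective_term_gt)
  have "(1 + g j) * (1 + 2 * p * g j)\<^sup>2 \<le> (1 + p * g 1) ^ 3"
    by (rule product_le_cube_of_gamma_bounds[OF assms(2) \<open>p \<le> 1/8\<close> assms(4-7) s1 sj gj_nonneg g1 gj])
  with j(2) show False
    by (simp add: not_le[symmetric])
qed

lemma SUP_objective_routing_unif_ne_Min:
  assumes "4 \<le> d" "(\<Sum>i\<in>{1..d}. lam i) = 1" "lam 1 = 0" "\<And>j. j \<in> {2..d} \<Longrightarrow> 2 * \<sigma>\<^sup>2 \<le> lam j"
    and "0 < p" "p * real d \<le> 1/2"
    and "0 < \<sigma>" "4096 * (3 + 2 / \<sigma>) * sqrt p \<le> \<sigma>\<^sup>2" "1 \<le> t" "\<sigma> \<le> 2 * p * t"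
    and "traffic_sol d lam (routing_unif p) nu"
    and "\<forall>i\<in>{1..d}. 0 < mu i \<and> sqrt (mu i) - sqrt (nu i) = t"
  shows "(SUP g\<in>Gamma_set d (routing_unif p). ereal (objective d mu nu g))
    \<noteq> ereal (Min ((\<lambda>i. (sqrt (mu i) - sqrt (nu i))\<^sup>2) ` {1..d}))"
proof -
  have "1 \<le> d"
    using assms(1) by simp
  note nu = traffic_sol_routing_unif_bounds[OF assms(11,2,3) this assms(5,6)]
  have nu_j: "nu 1 + \<sigma>\<^sup>2 \<le> nu j" if "j \<in> {2..d}" for j
    using nu(3)[of j] assms(4)[OF that] that zero_le_power2[of \<sigma>] by auto
  have mu: "mu i = (t + sqrt (nu i))\<^sup>2" if "i \<in> {1..d}" for i
  proof -
    have "0 < mu i" "sqrt (mu i) - sqrt (nu i) = t"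
      using assms(12) that by blast+
    then have "mu i = (sqrt (mu i))\<^sup>2" "sqrt (mu i) = t + sqrt (nu i)"
      by simp_all
    then show ?thesis
      by simp
  qed
  have "objective d mu nu g \<le> t\<^sup>2 - nu 1" if "g \<in> Gamma_set d (routing_unif p)" for g
    using objective_le_of_mem_Gamma_set[of d p \<sigma> t nu mu g, OF assms(1,5,6,7-10) nu(1,2) nu_j mu that] .
  then have "(SUP g\<in>Gamma_set d (routing_unif p). ereal (objective d mu nu g)) \<le> ereal (t\<^sup>2 - nu 1)"
    by (intro SUP_least) simp
  also have "\<dots> < ereal (Min ((\<lambda>i. (sqrt (mu i) - sqrt (nu i))\<^sup>2) ` {1..d}))"
  proof -
    have "(\<lambda>i. (sqrt (mu i) - sqrt (nu i))\<^sup>2) ` {1..d} = {t\<^sup>2}"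
      using assms(1,12) by force
    then show ?thesis
      using nu(1) by simp
  qed
  finally show ?thesis
    by simp
qed

lemma objective_gap_routing_unif:
  assumes "4 \<le> d" "(\<Sum>i\<in>{1..d}. lam i) = 1" "lam 1 = 0" "\<And>j. j \<in> {2..d} \<Longrightarrow> 2 * \<sigma>\<^sup>2 \<le> lam j"
    and "0 < p" "p * real d \<le> 1/2"
    and "0 < \<sigma>" "4096 * (3 + 2 / \<sigma>) * sqrt p \<le> \<sigma>\<^sup>2"
  shows "\<exists>tp>0. \<forall>t>tp. \<forall>nu mu. traffic_sol d lam (routing_unif p) nu \<and>
    (\<forall>i\<in>{1..d}. 0 < mu i \<and> sqrt (mu i) - sqrt (nu i) = t) \<longrightarrow>
    (SUP g\<in>Gamma_set d (routing_unif p). ereal (objective d mu nu g))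
      \<noteq> ereal (Min ((\<lambda>i. (sqrt (mu i) - sqrt (nu i))\<^sup>2) ` {1..d}))"
proof (rule exI[of _ "1 + \<sigma> / (2 * p)"], intro conjI allI impI)
  have "0 < \<sigma> / (2 * p)"
    using assms(5,7) by simp
  then show "0 < 1 + \<sigma> / (2 * p)"
    by linarith
  fix t nu mu
  assume "1 + \<sigma> / (2 * p) < t"
  then have "1 \<le> t" "\<sigma> / (2 * p) < t"
    using \<open>0 < \<sigma> / (2 * p)\<close> by linarith+
  then have "\<sigma> \<le> 2 * p * t"
    using assms(5) by (simp add: pos_divide_less_eq mult.commute)
  assume "traffic_sol d lam (routing_unif p) nu \<and> (\<forall>i\<in>{1..d}. 0 < mu i \<and> sqrt (mu i) - sqrt (nu i) = t)"
  then show "(SUP g\<in>Gamma_set d (routing_unif p). ereal (objective d mu nu g))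
      \<noteq> ereal (Min ((\<lambda>i. (sqrt (mu i) - sqrt (nu i))\<^sup>2) ` {1..d}))"
    using SUP_objective_routing_unif_ne_Min[OF assms \<open>1 \<le> t\<close> \<open>\<sigma> \<le> 2 * p * t\<close>] by blast
qed

theorem proposition3p5:
  fixes d :: nat and lam :: "nat \<Rightarrow> real"
  assumes "d > 3"
    and "(\<Sum>i\<in>{1..d}. lam i) = 1"
    and "lam 1 = 0"
    and "\<forall>i\<in>{2..d}. lam i > 0"
  shows "\<exists>p0>0. \<forall>p. 0 < p \<and> p < p0 \<and> p < 1 / (real d - 1) \<longrightarrow>
           (\<exists>tp>0. \<forall>t>tp. \<forall>nu mu.
              traffic_sol d lam (routing_unif p) nu \<and>
              (\<forall>i\<in>{1..d}. mu i > 0 \<and> sqrt (mu i) - sqrt (nu i) = t) \<and>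
              hypA d lam mu (routing_unif p) \<and> hypB d nu mu \<longrightarrow>
              (SUP g\<in>Gamma_set d (routing_unif p). ereal (objective d mu nu g))
                \<noteq> ereal (Min ((\<lambda>i. (sqrt (mu i) - sqrt (nu i))\<^sup>2) ` {1..d})))"
proof -
  define \<sigma> where "\<sigma> = sqrt (Min (lam ` {2..d}) / 2)"
  have "0 < Min (lam ` {2..d})"
    using assms(1,4) by (subst Min_gr_iff) auto
  then have "0 < \<sigma>" and "2 * \<sigma>\<^sup>2 = Min (lam ` {2..d})"
    by (simp_all add: \<sigma>_def)
  then have lam_ge: "\<And>j. j \<in> {2..d} \<Longrightarrow> 2 * \<sigma>\<^sup>2 \<le> lam j"
    by simp
  define K where "K = \<sigma>\<^sup>2 / (4096 * (3 + 2 / \<sigma>))"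
  have "0 < K"
    using \<open>0 < \<sigma>\<close> by (simp add: K_def add_pos_pos)
  have p_small: "p * real d \<le> 1/2" "4096 * (3 + 2 / \<sigma>) * sqrt p \<le> \<sigma>\<^sup>2"
    if "0 < p" "p < min (1 / (2 * real d)) (K\<^sup>2)" for p
  proof -
    show "p * real d \<le> 1/2"
      using that assms(1) by (simp add: field_simps)
    have "sqrt p \<le> K"
      using that \<open>0 < K\<close> real_sqrt_le_mono[of p "K\<^sup>2"] by simp
    then show "4096 * (3 + 2 / \<sigma>) * sqrt p \<le> \<sigma>\<^sup>2"
      using \<open>0 < \<sigma>\<close> by (simp add: K_def field_simps add_pos_pos)
  qed
  have "4 \<le> d"
    using assms(1) by simp
  note gap = objective_gap_routing_unif[OF this assms(2,3) lam_ge _ _ \<open>0 < \<sigma>\<close>]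
  show ?thesis
  proof (rule exI[of _ "min (1 / (2 * real d)) (K\<^sup>2)"], intro conjI allI impI)
    show "0 < min (1 / (2 * real d)) (K\<^sup>2)"
      using assms(1) \<open>0 < K\<close> by simp
  qed (auto intro!: ex_forward[OF gap] p_small)
qed

end
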